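(* Let $0<p<q$ be relatively prime integers, let $\mathcal{G}_\gamma$ be the Markov snake graph of slope $p/q$, let $m=m(\mathcal{G}_\gamma)$ be its number of perfect matchings, and let $\mathcal{G}^\circ(m)$ be the associated Markov band graph. Then the number of perfect matchings of $\mathcal{G}^\circ(m)$ is $3m$.
   Context: A tile is a unit square in the plane with sides parallel to the axes, viewed as a graph with 4 vertices and 4 edges. A snake graph with $d\ge1$ tiles is the union of tiles $G_1,\dots,G_d$ with each $G_{i+1}$ the translate of $G_i$ by $(0,1)$ or $(1,0)$, so that $G_i,G_{i+1}$ share exactly one edge $e_i$. A sign function on a snake graph is a map $f$ from edges to $\{+,-\}$ such that in each tile the north and west edges have the same sign, the south and east edges have the same sign, and north and south edges have opposite signs. For positive integers $a_1,\dots,a_n$ with $d=a_1+\dots+a_n-1\ge1$, $\mathcal{G}[a_1,\dots,a_n]$ is the unique snake graph with tiles $G_1,\dots,G_d$ admitting a sign function $f$ and an edge $e_d\in\{\text{north edge of }G_d,\text{east edge of }G_d\}$ such that, with $e_0$ the south edge of $G_1$, the sequence $(f(e_0),\dots,f(e_d))$ consists of $a_1$ copies of a sign $s$, then $a_2$ copies of $-s$, then $a_3$ copies of $s$, etc. For relatively prime integers $0<p<q$ put $v_i=\lfloor iq/p\rfloor-\lfloor (i-1)q/p\rfloor$ for $1\le i\le p-1$ and $v_p=q-1-\lfloor (p-1)q/p\rfloor$. The Markov snake graph of slope $p/q$ is $\mathcal{G}[c]$, where $c$ is the sequence $2,\,1^{2(v_1-1)},\,2,2,\,1^{2(v_2-1)},\,2,2,\dots,2,2,\,1^{2(v_p-1)},\,2$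 (here $1^k$ denotes $k$ consecutive entries equal to $1$). Its tiles $G_1,\dots,G_d$ begin and end with horizontal steps ($G_2$ is east of $G_1$ and $G_d$ is east of $G_{d-1}$). The Markov band graph $\mathcal{G}^\circ(m)$ is obtained from $\mathcal{G}_\gamma$ by adding a tile $G_{d+1}$ east of $G_d$, a tile $G_{d+2}$ east of $G_{d+1}$ and a tile $G_{d+3}$ north of $G_{d+2}$, and then identifying the north edge of $G_{d+3}$ with the south edge of $G_1$, where the northeast vertex of $G_{d+3}$ is identified with the southwest vertex of $G_1$ and the northwest vertex of $G_{d+3}$ with the southeast vertex of $G_1$. A perfect matching of a graph is a set of edges such that every vertex is incident to exactly one of them. *)

theory Defs
  imports Main
begin

(* Points of the integer lattice; an edge is the 2-element set of its endpoints. *)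
type_synonym point = "int \<times> int"
type_synonym edge = "point set"

datatype dir = East | North

fun step :: "dir \<Rightarrow> point \<Rightarrow> point" where
  "step East (x, y) = (x + 1, y)"
| "step North (x, y) = (x, y + 1)"

(* A snake graph with tiles G_1,...,G_d is encoded by the list ds of its d-1 steps;
   G_1 has its southwest corner at (0,0).  Tile index i (0-based) is G_{i+1};
   tile_pos ds i is the southwest corner of G_{i+1}. *)
fun tile_pos :: "dir list \<Rightarrow> nat \<Rightarrow> point" where
  "tile_pos ds 0 = (0, 0)"
| "tile_pos ds (Suc i) = step (ds ! i) (tile_pos ds i)"

definition south_edge :: "point \<Rightarrow> edge" where
  "south_edge p = {(fst p, snd p), (fst p + 1, snd p)}"
definition north_edge :: "point \<Rightarrow> edge" where
  "north_edge p = {(fst p, snd p + 1), (fst p + 1, snd p + 1)}"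
definition west_edge :: "point \<Rightarrow> edge" where
  "west_edge p = {(fst p, snd p), (fst p, snd p + 1)}"
definition east_edge :: "point \<Rightarrow> edge" where
  "east_edge p = {(fst p + 1, snd p), (fst p + 1, snd p + 1)}"

definition tile_corners :: "point \<Rightarrow> point set" where
  "tile_corners p = {(fst p, snd p), (fst p + 1, snd p), (fst p, snd p + 1), (fst p + 1, snd p + 1)}"

definition tile_edges :: "point \<Rightarrow> edge set" where
  "tile_edges p = {south_edge p, north_edge p, west_edge p, east_edge p}"

definition ntiles :: "dir list \<Rightarrow> nat" where
  "ntiles ds = length ds + 1"

definition snake_vertices :: "dir list \<Rightarrow> point set" where
  "snake_vertices ds = (\<Union>i<ntiles ds. tile_corners (tile_pos ds i))"

definition snake_edges :: "dir list \<Rightarrow> edge set" where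
  "snake_edges ds = (\<Union>i<ntiles ds. tile_edges (tile_pos ds i))"

(* Sign function (signs + = True, - = False) *)
definition is_sign_function :: "dir list \<Rightarrow> (edge \<Rightarrow> bool) \<Rightarrow> bool" where
  "is_sign_function ds f \<longleftrightarrow>
     (\<forall>i<ntiles ds. let p = tile_pos ds i in
        f (north_edge p) = f (west_edge p) \<and> f (south_edge p) = f (east_edge p)
        \<and> f (north_edge p) \<noteq> f (south_edge p))"

(* interior edge e_i shared by G_i and G_{i+1}, for 1 \<le> i \<le> d-1 *)
definition interior_edge :: "dir list \<Rightarrow> nat \<Rightarrow> edge" where
  "interior_edge ds i =
     (if ds ! (i - 1) = North then north_edge (tile_pos ds (i - 1))
      else east_edge (tile_pos ds (i - 1)))"

definition sign_pattern :: "nat list \<Rightarrow> bool \<Rightarrow> bool list" where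
  "sign_pattern as s = concat (map (\<lambda>k. replicate (as ! k) (if even k then s else \<not> s)) [0..<length as])"

(* ds is a snake graph with d = a_1+...+a_n-1 tiles satisfying the defining property of G[a_1,...,a_n] *)
definition cf_snake_prop :: "nat list \<Rightarrow> dir list \<Rightarrow> bool" where
  "cf_snake_prop as ds \<longleftrightarrow>
     ntiles ds = sum_list as - 1 \<and>
     (\<exists>f ed s. is_sign_function ds f \<and>
        ed \<in> {north_edge (tile_pos ds (ntiles ds - 1)), east_edge (tile_pos ds (ntiles ds - 1))} \<and>
        map f ([south_edge (tile_pos ds 0)] @ map (interior_edge ds) [1..<ntiles ds] @ [ed])
          = sign_pattern as s)"

definition cf_snake :: "nat list \<Rightarrow> dir list" where
  "cf_snake as = (THE ds. cf_snake_prop as ds)"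

definition markov_v :: "nat \<Rightarrow> nat \<Rightarrow> nat \<Rightarrow> nat" where
  "markov_v p q i =
     (if i < p then (i * q) div p - ((i - 1) * q) div p
      else q - 1 - ((p - 1) * q) div p)"

definition markov_seq :: "nat \<Rightarrow> nat \<Rightarrow> nat list" where
  "markov_seq p q = concat (map (\<lambda>i. [2] @ replicate (2 * (markov_v p q i - 1)) 1 @ [2]) [1..<p + 1])"

definition markov_snake :: "nat \<Rightarrow> nat \<Rightarrow> dir list" where
  "markov_snake p q = cf_snake (markov_seq p q)"

(* Band graph: add G_{d+1} east of G_d, G_{d+2} east of G_{d+1}, G_{d+3} north of G_{d+2},
   then identify NE corner of G_{d+3} with SW corner of G_1 and NW corner of G_{d+3}
   with SE corner of G_1 (hence north edge of G_{d+3} with south edge of G_1). *)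
definition band_ext :: "dir list \<Rightarrow> dir list" where
  "band_ext ds = ds @ [East, East, North]"

definition band_glue :: "dir list \<Rightarrow> point \<Rightarrow> point" where
  "band_glue ds v =
     (let t = tile_pos (band_ext ds) (ntiles ds + 2) in
      if v = (fst t + 1, snd t + 1) then (0, 0)
      else if v = (fst t, snd t + 1) then (1, 0)
      else v)"

definition band_vertices :: "dir list \<Rightarrow> point set" where
  "band_vertices ds = band_glue ds ` snake_vertices (band_ext ds)"

definition band_edges :: "dir list \<Rightarrow> edge set" where
  "band_edges ds = (\<lambda>e. band_glue ds ` e) ` snake_edges (band_ext ds)"

definition perfect_matchings :: "'v set \<Rightarrow> 'v set set \<Rightarrow> 'v set set set" where
  "perfect_matchings V E = {M. M \<subseteq> E \<and> (\<forall>v\<in>V. \<exists>!e. e \<in> M \<and> v \<in> e)}"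

end

theory Submission
  imports Defs
begin

text \<open>
  Unglued, the band graph is the snake graph \<open>K\<close> obtained from \<open>G\<^sub>\<gamma>\<close> by appending two tiles to
  the east, together with two extra edges \<open>x = {P, (1,0)}\<close> and \<open>y = {Q, (0,0)}\<close> created by gluing
  the third added tile onto the first one. Splitting the perfect matchings according to \<open>x\<close> and \<open>y\<close>,
  \<open>#PM = M(K) + M(K - x) + M(K - y) + M(K - x - y)\<close>, where \<open>M(H - X)\<close> counts the perfect
  matchings of \<open>H\<close> with the vertices \<open>X\<close> deleted. Snake graphs are bipartite and balanced for the
  checkerboard colouring, and since \<open>G\<^sub>\<gamma>\<close> has an odd number of tiles, \<open>x\<close> and \<open>y\<close> each join
  two vertices of the same colour, so the middle terms vanish. Let \<open>m\<^sub>N\<close> and \<open>m\<^sub>E\<close> count the perfect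
  matchings of \<open>G\<^sub>\<gamma>\<close> containing the north and the east edge of its last tile; these are the only
  edges at its north-east corner, so \<open>m = m\<^sub>N + m\<^sub>E\<close>. Appending the two tiles gives
  \<open>M(K) = 2m + m\<^sub>E\<close>, and \<open>K - x - y\<close> reduces to \<open>G\<^sub>\<gamma>\<close> minus the south edge of its first tile,
  which the half-turn symmetry of \<open>G\<^sub>\<gamma>\<close> turns into \<open>G\<^sub>\<gamma>\<close> minus the north edge of its last tile.
  Hence the total is \<open>2m + m\<^sub>E + m\<^sub>N = 3m\<close>. The symmetry and the parity of \<open>G\<^sub>\<gamma>\<close> come from
  \<open>v\<^sub>i = v\<^sub>p\<^sub>+\<^sub>1\<^sub>-\<^sub>i\<close>, i.e. from \<open>\<lfloor>iq/p\<rfloor> + \<lfloor>(p-i)q/p\<rfloor> = q - 1\<close> for coprime \<open>p, q\<close>.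
\<close>

section \<open>Perfect matchings of finite graphs\<close>

definition finite_graph :: "'v set \<Rightarrow> 'v set set \<Rightarrow> bool" where
  "finite_graph V E \<longleftrightarrow> finite V \<and> (\<forall>e\<in>E. \<exists>a b. a \<noteq> b \<and> e = {a, b} \<and> a \<in> V \<and> b \<in> V)"

lemma finite_graph_edge_subset: "finite_graph V E \<Longrightarrow> e \<in> E \<Longrightarrow> e \<subseteq> V"
  unfolding finite_graph_def by fastforce

lemma finite_graph_finite_edges: "finite_graph V E \<Longrightarrow> finite E"
  using finite_graph_edge_subset[of V E] unfolding finite_graph_def
  by (meson Pow_iff finite_Pow_iff finite_subset subsetI)

lemma finite_perfect_matchings: "finite_graph V E \<Longrightarrow> finite (perfect_matchings V E)"
  by (rule finite_subset[of _ "Pow E"]) (auto simp: perfect_matchings_def finite_graph_finite_edges)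

lemma finite_graph_delete_vertices: "finite_graph V E \<Longrightarrow> finite_graph (V - X) {f\<in>E. f \<inter> X = {}}"
  unfolding finite_graph_def by fastforce

lemma finite_graph_insert:
  "finite_graph V E \<Longrightarrow> a \<noteq> b \<Longrightarrow> a \<in> V \<Longrightarrow> b \<in> V \<Longrightarrow> finite_graph V (insert {a, b} E)"
  unfolding finite_graph_def by blast

lemma finite_graph_subset: "finite_graph V E \<Longrightarrow> E' \<subseteq> E \<Longrightarrow> finite_graph V E'"
  unfolding finite_graph_def by blast

lemma perfect_matchings_iff:
  "M \<in> perfect_matchings V E \<longleftrightarrow> M \<subseteq> E \<and> (\<forall>v\<in>V. \<exists>e\<in>M. v \<in> e)
     \<and> (\<forall>v\<in>V. \<forall>e1\<in>M. \<forall>e2\<in>M. v \<in> e1 \<longrightarrow> v \<in> e2 \<longrightarrow> e1 = e2)"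
  unfolding perfect_matchings_def by (auto; metis)

lemma perfect_matchingsI:
  assumes "M \<subseteq> E" "\<And>v. v \<in> V \<Longrightarrow> \<exists>e\<in>M. v \<in> e"
    "\<And>v e1 e2. v \<in> V \<Longrightarrow> e1 \<in> M \<Longrightarrow> e2 \<in> M \<Longrightarrow> v \<in> e1 \<Longrightarrow> v \<in> e2 \<Longrightarrow> e1 = e2"
  shows "M \<in> perfect_matchings V E"
  using assms unfolding perfect_matchings_iff by blast

lemma perfect_matchingsD:
  assumes "M \<in> perfect_matchings V E"
  shows "M \<subseteq> E" "\<And>v. v \<in> V \<Longrightarrow> \<exists>e\<in>M. v \<in> e"
    "\<And>v e1 e2. v \<in> V \<Longrightarrow> e1 \<in> M \<Longrightarrow> e2 \<in> M \<Longrightarrow> v \<in> e1 \<Longrightarrow> v \<in> e2 \<Longrightarrow> e1 = e2"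
  using assms unfolding perfect_matchings_iff by blast+

lemma perfect_matchings_without_edge:
  "{M \<in> perfect_matchings V E. x \<notin> M} = perfect_matchings V (E - {x})"
  unfolding perfect_matchings_def by auto

lemma perfect_matchings_with_edge:
  assumes "x \<in> E" "x \<subseteq> V" "x \<noteq> {}"
  shows "{M \<in> perfect_matchings V E. x \<in> M} = insert x ` perfect_matchings (V - x) {f\<in>E. f \<inter> x = {}}"
proof (intro equalityI subsetI)
  fix M assume "M \<in> {M \<in> perfect_matchings V E. x \<in> M}"
  then have M: "M \<subseteq> E" "x \<in> M" "\<forall>v\<in>V. \<exists>e\<in>M. v \<in> e"
    "\<forall>v\<in>V. \<forall>e1\<in>M. \<forall>e2\<in>M. v \<in> e1 \<longrightarrow> v \<in> e2 \<longrightarrow> e1 = e2"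
    unfolding perfect_matchings_iff by blast+
  have disj: "f \<inter> x = {}" if f: "f \<in> M - {x}" for f
  proof (rule equals0I)
    fix w assume "w \<in> f \<inter> x"
    then have "f = x" using f M(2,4) assms(2) by blast
    then show False using f by blast
  qed
  have "M - {x} \<subseteq> {f\<in>E. f \<inter> x = {}}" using M(1) disj by blast
  moreover have "\<forall>v\<in>V - x. \<exists>e\<in>M - {x}. v \<in> e" using M(3) by blast
  moreover have "\<forall>v\<in>V - x. \<forall>e1\<in>M - {x}. \<forall>e2\<in>M - {x}. v \<in> e1 \<longrightarrow> v \<in> e2 \<longrightarrow> e1 = e2"
    using M(4) by blast
  ultimately have "M - {x} \<in> perfect_matchings (V - x) {f\<in>E. f \<inter> x = {}}"
    unfolding perfect_matchings_iff by blast
  moreover have "M = insert x (M - {x})" using M(2) by blast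
  ultimately show "M \<in> insert x ` perfect_matchings (V - x) {f\<in>E. f \<inter> x = {}}"
    by (rule image_eqI[rotated])
next
  fix N assume "N \<in> insert x ` perfect_matchings (V - x) {f\<in>E. f \<inter> x = {}}"
  then obtain M where N: "N = insert x M" and "M \<in> perfect_matchings (V - x) {f\<in>E. f \<inter> x = {}}"
    by blast
  then have M: "M \<subseteq> {f\<in>E. f \<inter> x = {}}" "\<forall>v\<in>V - x. \<exists>e\<in>M. v \<in> e"
    "\<forall>v\<in>V - x. \<forall>e1\<in>M. \<forall>e2\<in>M. v \<in> e1 \<longrightarrow> v \<in> e2 \<longrightarrow> e1 = e2"
    unfolding perfect_matchings_iff by auto
  have "insert x M \<subseteq> E" using M(1) assms(1) by blast
  moreover have "\<exists>e\<in>insert x M. v \<in> e" if "v \<in> V" for v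
    using that M(2) by (cases "v \<in> x") auto
  moreover have "e1 = e2" if "v \<in> V" "e1 \<in> insert x M" "e2 \<in> insert x M" "v \<in> e1" "v \<in> e2" for v e1 e2
    using that M(1,3) by (cases "v \<in> x") blast+
  ultimately show "N \<in> {M \<in> perfect_matchings V E. x \<in> M}"
    unfolding N perfect_matchings_iff by blast
qed

lemma card_perfect_matchings_split_edge:
  assumes G: "finite_graph V E" and x: "x \<in> E"
  shows "card (perfect_matchings V E) = card (perfect_matchings V (E - {x}))
           + card (perfect_matchings (V - x) {f\<in>E. f \<inter> x = {}})"
proof -
  have xV: "x \<subseteq> V" "x \<noteq> {}" using G x unfolding finite_graph_def by auto
  let ?P = "perfect_matchings V E" and ?Px = "perfect_matchings (V - x) {f\<in>E. f \<inter> x = {}}"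
  have "card ({M \<in> ?P. x \<notin> M} \<union> {M \<in> ?P. x \<in> M}) = card {M \<in> ?P. x \<notin> M} + card {M \<in> ?P. x \<in> M}"
    by (rule card_Un_disjoint) (use finite_perfect_matchings[OF G] in auto)
  moreover have "{M \<in> ?P. x \<notin> M} \<union> {M \<in> ?P. x \<in> M} = ?P" by blast
  moreover have "x \<notin> M" if "M \<in> ?Px" for M
    using that xV unfolding perfect_matchings_def by auto
  then have "inj_on (insert x) ?Px" by (meson inj_onI insert_ident)
  then have "card {M \<in> ?P. x \<in> M} = card ?Px"
    unfolding perfect_matchings_with_edge[OF x xV] by (rule card_image)
  ultimately show ?thesis by (simp add: perfect_matchings_without_edge)
qed

lemma card_perfect_matchings_pendant:
  assumes G: "finite_graph V E" and x: "x \<in> E" and w: "w \<in> x" "w \<in> V"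
    and pendant: "\<And>e. e \<in> E \<Longrightarrow> w \<in> e \<Longrightarrow> e = x"
  shows "card (perfect_matchings V E) = card (perfect_matchings (V - x) {f\<in>E. f \<inter> x = {}})"
proof -
  have "perfect_matchings V (E - {x}) = {}"
    using w(2) pendant unfolding perfect_matchings_def by blast
  then show ?thesis using card_perfect_matchings_split_edge[OF G x] by simp
qed

lemma perfect_matchings_image:
  assumes h: "inj h" and M: "M \<in> perfect_matchings V E"
  shows "(`) h ` M \<in> perfect_matchings (h ` V) ((`) h ` E)"
proof (rule perfect_matchingsI)
  show "(`) h ` M \<subseteq> (`) h ` E" using perfect_matchingsD(1)[OF M] by blast
next
  fix v assume "v \<in> h ` V"
  then obtain w e where "v = h w" "e \<in> M" "w \<in> e" using perfect_matchingsD(2)[OF M] by blast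
  then show "\<exists>e\<in>(`) h ` M. v \<in> e" by blast
next
  fix v e1 e2 assume "v \<in> h ` V" "e1 \<in> (`) h ` M" "e2 \<in> (`) h ` M" "v \<in> e1" "v \<in> e2"
  then obtain w f1 f2 where "w \<in> V" "f1 \<in> M" "f2 \<in> M" "w \<in> f1" "w \<in> f2" "e1 = h ` f1" "e2 = h ` f2"
    using h by (auto simp: inj_image_mem_iff) (metis injD)
  then show "e1 = e2" using perfect_matchingsD(3)[OF M] by blast
qed

lemma card_perfect_matchings_bij_image:
  assumes "bij h"
  shows "card (perfect_matchings (h ` V) ((`) h ` E)) = card (perfect_matchings V E)"
proof -
  let ?H = "(`) ((`) h)" and ?G = "(`) ((`) (inv h))"
  have h: "inj h" "inj (inv h)" and inv_h: "\<And>x. inv h (h x) = x" "\<And>x. h (inv h x) = x"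
    using assms bij_imp_bij_inv bij_is_inj bij_inv_eq_iff by metis+
  have "perfect_matchings (h ` V) (?H E) = ?H ` perfect_matchings V E"
  proof (intro equalityI subsetI)
    fix N assume "N \<in> perfect_matchings (h ` V) (?H E)"
    have "N = ?H (?G N)" by (simp add: image_image inv_h(2))
    moreover from perfect_matchings_image[OF h(2) \<open>N \<in> _\<close>] have "?G N \<in> perfect_matchings V E"
      by (simp add: image_image inv_h(1))
    ultimately show "N \<in> ?H ` perfect_matchings V E" by (rule image_eqI)
  next
    fix N assume "N \<in> ?H ` perfect_matchings V E"
    then obtain M where "N = ?H M" "M \<in> perfect_matchings V E" by blast
    then show "N \<in> perfect_matchings (h ` V) (?H E)" using perfect_matchings_image[OF h(1)] by simp
  qed
  moreover have "inj ((`) h)" using h(1) by (simp add: inj_def inj_image_eq_iff)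
  then have "inj ?H" by (simp add: inj_def inj_image_eq_iff)
  ultimately show ?thesis by (metis card_image inj_on_subset subset_UNIV)
qed

lemma card_colour_class_eq_card_matching:
  fixes c :: "'v \<Rightarrow> bool"
  assumes G: "finite_graph V E"
    and bichromatic: "\<And>e a b. e \<in> E \<Longrightarrow> a \<in> e \<Longrightarrow> b \<in> e \<Longrightarrow> a \<noteq> b \<Longrightarrow> c a \<noteq> c b"
    and M: "M \<in> perfect_matchings V E"
  shows "card {w\<in>V. c w = t} = card M"
proof -
  define edge_at where "edge_at w = (THE e. e \<in> M \<and> w \<in> e)" for w
  have edge_at: "edge_at w = e" if "w \<in> V" "e \<in> M" "w \<in> e" for w e
    unfolding edge_at_def
    by (rule the_equality) (use that perfect_matchingsD(3)[OF M] in blast)+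
  have "bij_betw edge_at {w\<in>V. c w = t} M"
  proof (rule bij_betw_imageI)
    show "inj_on edge_at {w\<in>V. c w = t}"
    proof (rule inj_onI)
      fix w1 w2 assume w: "w1 \<in> {w\<in>V. c w = t}" "w2 \<in> {w\<in>V. c w = t}" "edge_at w1 = edge_at w2"
      obtain e1 where e1: "e1 \<in> M" "w1 \<in> e1" using w(1) perfect_matchingsD(2)[OF M] by blast
      obtain e2 where e2: "e2 \<in> M" "w2 \<in> e2" using w(2) perfect_matchingsD(2)[OF M] by blast
      have "e1 = e2" using edge_at[of w1 e1] edge_at[of w2 e2] w e1 e2 by simp
      moreover have "e1 \<in> E" using e1(1) perfect_matchingsD(1)[OF M] by blast
      ultimately show "w1 = w2" using bichromatic[of e1 w1 w2] e1 e2 w(1,2) by auto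
    qed
  next
    show "edge_at ` {w\<in>V. c w = t} = M"
    proof (intro equalityI subsetI)
      fix e assume "e \<in> edge_at ` {w\<in>V. c w = t}"
      then show "e \<in> M" using perfect_matchingsD(2)[OF M] edge_at by force
    next
      fix e assume e: "e \<in> M"
      then obtain a b where ab: "a \<noteq> b" "e = {a, b}" "a \<in> V" "b \<in> V"
        using G perfect_matchingsD(1)[OF M] unfolding finite_graph_def by blast
      then have "c a \<noteq> c b" using bichromatic e perfect_matchingsD(1)[OF M] by blast
      then have "c a = t \<or> c b = t" by (cases t) auto
      then obtain w where "w \<in> e" "w \<in> V" "c w = t" using ab by auto
      then show "e \<in> edge_at ` {w\<in>V. c w = t}" using edge_at[OF _ e] by force
    qed
  qed
  then show ?thesis by (rule bij_betw_same_card)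
qed

lemma perfect_matchings_delete_same_colour:
  fixes c :: "'v \<Rightarrow> bool"
  assumes G: "finite_graph V E"
    and bichromatic: "\<And>e a b. e \<in> E \<Longrightarrow> a \<in> e \<Longrightarrow> b \<in> e \<Longrightarrow> a \<noteq> b \<Longrightarrow> c a \<noteq> c b"
    and balanced: "card {w\<in>V. c w} = card {w\<in>V. \<not> c w}"
    and ab: "a \<in> V" "b \<in> V" "a \<noteq> b" "c a = c b"
  shows "perfect_matchings (V - {a, b}) {f\<in>E. f \<inter> {a, b} = {}} = {}"
proof (rule ccontr)
  assume "perfect_matchings (V - {a, b}) {f\<in>E. f \<inter> {a, b} = {}} \<noteq> {}"
  then obtain M where M: "M \<in> perfect_matchings (V - {a, b}) {f\<in>E. f \<inter> {a, b} = {}}" by blast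
  have count: "card {w\<in>V - {a, b}. c w = t} = card M" for t
    by (rule card_colour_class_eq_card_matching[OF finite_graph_delete_vertices[OF G] _ M])
      (use bichromatic in blast)
  have fin: "finite {w\<in>V. c w = c a}" using G unfolding finite_graph_def by simp
  have sub: "{a, b} \<subseteq> {w\<in>V. c w = c a}" using ab by auto
  have "card {w\<in>V. c w = c a} = card {w\<in>V. c w = (\<not> c a)}"
    using balanced by (cases "c a") simp_all
  moreover have "{w\<in>V - {a, b}. c w = c a} = {w\<in>V. c w = c a} - {a, b}" by blast
  moreover have "{w\<in>V - {a, b}. c w = (\<not> c a)} = {w\<in>V. c w = (\<not> c a)}" using ab by auto
  moreover have "card ({w\<in>V. c w = c a} - {a, b}) = card {w\<in>V. c w = c a} - 2"
    using card_Diff_subset[OF _ sub] ab(3) by simp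
  moreover have "2 \<le> card {w\<in>V. c w = c a}" using card_mono[OF fin sub] ab(3) by simp
  ultimately show False using count[of "c a"] count[of "\<not> c a"] by simp
qed

definition pm_count_minus :: "'v set \<Rightarrow> 'v set set \<Rightarrow> 'v set \<Rightarrow> nat" where
  "pm_count_minus V E X = card (perfect_matchings (V - X) {f\<in>E. f \<inter> X = {}})"

lemma pm_count_minus_empty: "pm_count_minus V E {} = card (perfect_matchings V E)"
  unfolding pm_count_minus_def by simp

lemma restrict_edges_Un: "{f \<in> {f\<in>E. f \<inter> X = {}}. f \<inter> Y = {}} = {f\<in>E. f \<inter> (X \<union> Y) = {}}"
  by blast

lemma pm_count_minus_split_edge:
  assumes "finite_graph V E" "x \<in> E" "x \<inter> X = {}"
  shows "pm_count_minus V E X = pm_count_minus V (E - {x}) X + pm_count_minus V E (X \<union> x)"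
proof -
  have "{f\<in>E. f \<inter> X = {}} - {x} = {f\<in>E - {x}. f \<inter> X = {}}" "V - X - x = V - (X \<union> x)" by blast+
  then show ?thesis
    using card_perfect_matchings_split_edge[OF finite_graph_delete_vertices[OF assms(1)], of x X] assms(2,3)
    unfolding pm_count_minus_def restrict_edges_Un by simp
qed

lemma pm_count_minus_insert_edge:
  assumes G: "finite_graph V (insert x E)" and x: "x \<notin> E" "x \<inter> X = {}"
  shows "pm_count_minus V (insert x E) X = pm_count_minus V E X + pm_count_minus V E (X \<union> x)"
proof -
  have "x \<noteq> {}" using G unfolding finite_graph_def by blast
  then have "{f \<in> insert x E. f \<inter> (X \<union> x) = {}} = {f \<in> E. f \<inter> (X \<union> x) = {}}" by auto
  moreover have "insert x E - {x} = E" using x(1) by blast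
  ultimately show ?thesis
    using pm_count_minus_split_edge[OF G insertI1 x(2)] unfolding pm_count_minus_def by simp
qed

lemma card_perfect_matchings_insert_two_edges:
  assumes G: "finite_graph V (insert x (insert y E))"
    and new: "x \<notin> insert y E" "y \<notin> E" and disjoint: "x \<inter> y = {}"
  shows "card (perfect_matchings V (insert x (insert y E)))
    = pm_count_minus V E {} + pm_count_minus V E x + pm_count_minus V E y
      + pm_count_minus V E (x \<union> y)"
proof -
  have G': "finite_graph V (insert y E)" using finite_graph_subset[OF G] by blast
  have "card (perfect_matchings V (insert x (insert y E)))
      = pm_count_minus V (insert y E) {} + pm_count_minus V (insert y E) x"
    using pm_count_minus_insert_edge[OF G new(1), of "{}"] by (simp add: pm_count_minus_empty)
  also have "\<dots> = pm_count_minus V E {} + pm_count_minus V E y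
      + pm_count_minus V E x + pm_count_minus V E (x \<union> y)"
    using pm_count_minus_insert_edge[OF G' new(2), of "{}"]
      pm_count_minus_insert_edge[OF G' new(2), of x] disjoint by (simp add: Int_commute)
  finally show ?thesis by simp
qed

lemma pm_count_minus_pendant:
  assumes G: "finite_graph V E" and x: "x \<in> E" "x \<inter> X = {}" and w: "w \<in> x" "w \<in> V"
    and pendant: "\<And>e. e \<in> E \<Longrightarrow> e \<inter> X = {} \<Longrightarrow> w \<in> e \<Longrightarrow> e = x"
  shows "pm_count_minus V E X = pm_count_minus V E (X \<union> x)"
proof -
  have "card (perfect_matchings (V - X) {f\<in>E. f \<inter> X = {}})
      = card (perfect_matchings (V - X - x) {f \<in> {f\<in>E. f \<inter> X = {}}. f \<inter> x = {}})"
    by (rule card_perfect_matchings_pendant[OF finite_graph_delete_vertices[OF G], of x X w])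
      (use x w pendant in blast)+
  moreover have "V - X - x = V - (X \<union> x)" by blast
  ultimately show ?thesis unfolding pm_count_minus_def restrict_edges_Un by simp
qed

lemma pm_count_minus_delete_new_vertices:
  assumes "N \<inter> V = {}" "\<And>e. e \<in> E \<Longrightarrow> e \<subseteq> V" "\<And>f. f \<in> F \<Longrightarrow> f \<inter> N \<noteq> {}"
  shows "pm_count_minus (V \<union> N) (E \<union> F) (X \<union> N) = pm_count_minus V E X"
proof -
  have "V \<union> N - (X \<union> N) = V - X" using assms(1) by blast
  moreover have "{f \<in> E \<union> F. f \<inter> (X \<union> N) = {}} = {f\<in>E. f \<inter> X = {}}" using assms by blast
  ultimately show ?thesis unfolding pm_count_minus_def by simp
qed

lemma pm_count_minus_bij_image:
  assumes "bij h"
  shows "pm_count_minus (h ` V) ((`) h ` E) (h ` X) = pm_count_minus V E X"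
proof -
  have inj: "inj h" using assms by (rule bij_is_inj)
  have "h ` V - h ` X = h ` (V - X)" using inj by (simp add: image_set_diff)
  moreover have "{f \<in> (`) h ` E. f \<inter> h ` X = {}} = (`) h ` {f\<in>E. f \<inter> X = {}}"
    using inj by (auto simp: image_Int[symmetric] dest: injD)
  ultimately show ?thesis
    unfolding pm_count_minus_def using card_perfect_matchings_bij_image[OF assms] by simp
qed

text \<open>Gluing a tile along the edge \<open>{u, v}\<close> adds the corners \<open>u'\<close>, \<open>v'\<close> next to \<open>u\<close>, \<open>v\<close>.\<close>

locale square_attachment =
  fixes V :: "'v set" and E :: "'v set set" and u v u' v' :: 'v
  assumes graph: "finite_graph V E"
    and old: "u \<in> V" "v \<in> V" "u \<noteq> v"
    and new: "u' \<notin> V" "v' \<notin> V" "u' \<noteq> v'"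
begin

abbreviation "V' \<equiv> V \<union> {u', v'}"
abbreviation "E' \<equiv> E \<union> {{u, u'}, {v, v'}, {u', v'}}"

lemma new_distinct: "u \<noteq> u'" "u \<noteq> v'" "v \<noteq> u'" "v \<noteq> v'"
  using old new by auto

lemma edges_subset: "e \<in> E \<Longrightarrow> e \<subseteq> V"
  using graph by (rule finite_graph_edge_subset)

lemma finite_graph_attached: "finite_graph V' E'"
  unfolding finite_graph_def
proof (intro conjI ballI)
  show "finite V'" using graph unfolding finite_graph_def by simp
next
  fix e assume "e \<in> E'"
  then consider "e \<in> E" | "e \<in> {{u, u'}, {v, v'}, {u', v'}}" by blast
  then show "\<exists>a b. a \<noteq> b \<and> e = {a, b} \<and> a \<in> V' \<and> b \<in> V'"
  proof cases
    case 1
    then show ?thesis using graph unfolding finite_graph_def by blast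
  next
    case 2
    then show ?thesis using old new new_distinct by blast
  qed
qed

lemma pm_count_minus_new_pair: "pm_count_minus V' E' (X \<union> {u', v'}) = pm_count_minus V E X"
  by (rule pm_count_minus_delete_new_vertices) (use new edges_subset in auto)

lemma pm_count_minus_new_corner:
  assumes "u \<notin> X" "u' \<notin> X"
  shows "pm_count_minus V' E' (X \<union> {v'}) = pm_count_minus V E (X \<union> {u})"
proof -
  have "pm_count_minus V' E' (X \<union> {v'}) = pm_count_minus V' E' (X \<union> {v'} \<union> {u, u'})"
    by (rule pm_count_minus_pendant[OF finite_graph_attached, of _ _ u'])
      (use assms new edges_subset new_distinct in auto)
  also have "X \<union> {v'} \<union> {u, u'} = (X \<union> {u}) \<union> {u', v'}" by blast
  finally show ?thesis using pm_count_minus_new_pair by simp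
qed

lemma pm_count_minus_attached:
  assumes "u \<notin> X" "v \<notin> X" "u' \<notin> X" "v' \<notin> X"
  shows "pm_count_minus V' E' X = pm_count_minus V E X + pm_count_minus V E (X \<union> {u, v})"
proof -
  let ?E = "E \<union> {{u, u'}, {v, v'}}"
  have G: "finite_graph V' ?E" by (rule finite_graph_subset[OF finite_graph_attached]) blast
  have "E' - {{u', v'}} = ?E" using new edges_subset new_distinct by (auto simp: doubleton_eq_iff)
  then have "pm_count_minus V' E' X = pm_count_minus V' ?E X + pm_count_minus V' E' (X \<union> {u', v'})"
    using pm_count_minus_split_edge[OF finite_graph_attached, of "{u', v'}" X] assms by simp
  also have "pm_count_minus V' ?E X = pm_count_minus V' ?E (X \<union> {u, u'})"
    by (rule pm_count_minus_pendant[OF G, of _ _ u']) (use assms new edges_subset new_distinct in auto)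
  also have "\<dots> = pm_count_minus V' ?E (X \<union> {u, u'} \<union> {v, v'})"
    by (rule pm_count_minus_pendant[OF G, of _ _ v']) (use assms old new edges_subset new_distinct in auto)
  also have "X \<union> {u, u'} \<union> {v, v'} = (X \<union> {u, v}) \<union> {u', v'}" by blast
  also have "pm_count_minus V' ?E \<dots> = pm_count_minus V E (X \<union> {u, v})"
    by (rule pm_count_minus_delete_new_vertices) (use new edges_subset in auto)
  finally show ?thesis using pm_count_minus_new_pair by simp
qed

end

section \<open>Snake graphs\<close>

lemma step_coord_sum: "fst (step d p) + snd (step d p) = fst p + snd p + 1"
  by (cases d; cases p) auto

lemma tile_pos_coord_sum: "fst (tile_pos ds i) + snd (tile_pos ds i) = int i"
  by (induction i) (auto simp: step_coord_sum)

lemma tile_pos_nonneg: "0 \<le> fst (tile_pos ds i) \<and> 0 \<le> snd (tile_pos ds i)"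
proof (induction i)
  case (Suc i) then show ?case by (cases "ds ! i"; cases "tile_pos ds i") auto
qed simp

lemma tile_pos_append: "i \<le> length ds \<Longrightarrow> tile_pos (ds @ ds') i = tile_pos ds i"
  by (induction i) (auto simp: nth_append)

abbreviation last_tile :: "dir list \<Rightarrow> point" where
  "last_tile ds \<equiv> tile_pos ds (length ds)"

lemma last_tile_snoc: "last_tile (ds @ [d]) = step d (last_tile ds)"
  by (simp add: tile_pos_append)

definition ne_corner :: "point \<Rightarrow> point" where
  "ne_corner p = (fst p + 1, snd p + 1)"

lemma tile_corners_step:
  "tile_corners (step d p) = {step d p, ne_corner p, step d (step d p), ne_corner (step d p)}"
  by (cases d; cases p) (auto simp: tile_corners_def ne_corner_def)

lemma tile_edges_step:
  "tile_edges (step d p) = {{step d p, ne_corner p}, {step d p, step d (step d p)},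
     {ne_corner p, ne_corner (step d p)}, {step d (step d p), ne_corner (step d p)}}"
  by (cases d; cases p)
    (auto simp: tile_edges_def south_edge_def north_edge_def east_edge_def west_edge_def ne_corner_def)

lemma step_in_tile_corners: "step d p \<in> tile_corners p"
  and ne_corner_in_tile_corners: "ne_corner p \<in> tile_corners p"
  by (cases d; cases p; simp add: tile_corners_def ne_corner_def)+

lemma shared_edge_in_tile_edges: "{step d p, ne_corner p} \<in> tile_edges p"
  by (cases d; cases p)
    (auto simp: tile_edges_def north_edge_def east_edge_def ne_corner_def insert_commute)

lemma tile_corners_subset_snake_vertices:
  "i \<le> length ds \<Longrightarrow> tile_corners (tile_pos ds i) \<subseteq> snake_vertices ds"
  unfolding snake_vertices_def ntiles_def by (auto simp: less_Suc_eq_le)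

lemma tile_edges_subset_snake_edges:
  "i \<le> length ds \<Longrightarrow> tile_edges (tile_pos ds i) \<subseteq> snake_edges ds"
  unfolding snake_edges_def ntiles_def by (auto simp: less_Suc_eq_le)

lemma snake_vertices_snoc:
  "snake_vertices (ds @ [d]) = snake_vertices ds \<union> tile_corners (step d (last_tile ds))"
proof -
  have "snake_vertices (ds @ [d]) = (\<Union>i<Suc (length ds). tile_corners (tile_pos (ds @ [d]) i))
      \<union> tile_corners (tile_pos (ds @ [d]) (Suc (length ds)))"
    by (simp add: snake_vertices_def ntiles_def lessThan_Suc Un_commute)
  also have "(\<Union>i<Suc (length ds). tile_corners (tile_pos (ds @ [d]) i)) = snake_vertices ds"
    unfolding snake_vertices_def ntiles_def by (intro SUP_cong) (auto simp: tile_pos_append)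
  finally show ?thesis by (simp add: tile_pos_append)
qed

lemma snake_edges_snoc:
  "snake_edges (ds @ [d]) = snake_edges ds \<union> tile_edges (step d (last_tile ds))"
proof -
  have "snake_edges (ds @ [d]) = (\<Union>i<Suc (length ds). tile_edges (tile_pos (ds @ [d]) i))
      \<union> tile_edges (tile_pos (ds @ [d]) (Suc (length ds)))"
    by (simp add: snake_edges_def ntiles_def lessThan_Suc Un_commute)
  also have "(\<Union>i<Suc (length ds). tile_edges (tile_pos (ds @ [d]) i)) = snake_edges ds"
    unfolding snake_edges_def ntiles_def by (intro SUP_cong) (auto simp: tile_pos_append)
  finally show ?thesis by (simp add: tile_pos_append)
qed

lemma tile_corner_bound:
  assumes "w \<in> tile_corners p"
  shows "fst w + snd w \<le> fst p + snd p + 2 \<and> (fst w + snd w = fst p + snd p + 2 \<longrightarrow> w = ne_corner p)"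
  using assms by (cases p) (auto simp: tile_corners_def ne_corner_def)

lemma snake_vertex_bound:
  assumes "w \<in> snake_vertices ds"
  shows "fst w + snd w \<le> int (length ds) + 2
    \<and> (fst w + snd w = int (length ds) + 2 \<longrightarrow> w = ne_corner (last_tile ds))"
proof -
  obtain i where i: "i \<le> length ds" "w \<in> tile_corners (tile_pos ds i)"
    using assms unfolding snake_vertices_def ntiles_def by (auto simp: less_Suc_eq_le)
  then show ?thesis
    using tile_corner_bound[OF i(2)] tile_pos_coord_sum[of ds i] by (cases "i = length ds") auto
qed

lemma snake_edge_unit_step:
  assumes "e \<in> snake_edges ds"
  obtains a d where "e = {a, step d a}" "a \<in> snake_vertices ds" "step d a \<in> snake_vertices ds"
proof -
  obtain i where i: "i \<le> length ds" "e \<in> tile_edges (tile_pos ds i)"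
    using assms unfolding snake_edges_def ntiles_def by (auto simp: less_Suc_eq_le)
  let ?p = "tile_pos ds i"
  have "tile_edges ?p = {{?p, step East ?p}, {step North ?p, step East (step North ?p)},
      {?p, step North ?p}, {step East ?p, step North (step East ?p)}}"
    by (cases ?p) (simp add: tile_edges_def south_edge_def north_edge_def east_edge_def west_edge_def)
  then consider "e = {?p, step East ?p}" | "e = {step North ?p, step East (step North ?p)}"
    | "e = {?p, step North ?p}" | "e = {step East ?p, step North (step East ?p)}"
    using i(2) by blast
  moreover have "{?p, step North ?p, step East ?p, step East (step North ?p), step North (step East ?p)}
      \<subseteq> snake_vertices ds"
    using tile_corners_subset_snake_vertices[OF i(1)] by (cases ?p) (simp add: tile_corners_def)
  ultimately show ?thesis using that by (cases; simp)
qed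

lemma finite_graph_snake: "finite_graph (snake_vertices ds) (snake_edges ds)"
  unfolding finite_graph_def
proof (intro conjI ballI)
  show "finite (snake_vertices ds)" unfolding snake_vertices_def tile_corners_def by auto
next
  fix e assume "e \<in> snake_edges ds"
  then obtain a d where "e = {a, step d a}" "a \<in> snake_vertices ds" "step d a \<in> snake_vertices ds"
    by (rule snake_edge_unit_step)
  moreover have "a \<noteq> step d a" using step_coord_sum[of d a] by auto
  ultimately show "\<exists>a b. a \<noteq> b \<and> e = {a, b} \<and> a \<in> snake_vertices ds \<and> b \<in> snake_vertices ds"
    by blast
qed

lemma snake_edges_subset: "e \<in> snake_edges ds \<Longrightarrow> e \<subseteq> snake_vertices ds"
  using finite_graph_snake by (rule finite_graph_edge_subset)

lemma new_corners_notin_snake_vertices: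
  "step d (step d (last_tile ds)) \<notin> snake_vertices ds"
  "ne_corner (step d (last_tile ds)) \<notin> snake_vertices ds"
proof -
  let ?p = "last_tile ds"
  have s: "fst ?p + snd ?p = int (length ds)" by (rule tile_pos_coord_sum)
  show "step d (step d ?p) \<notin> snake_vertices ds"
  proof
    assume "step d (step d ?p) \<in> snake_vertices ds"
    moreover have "step d (step d ?p) \<noteq> ne_corner ?p" by (cases d; cases ?p) (auto simp: ne_corner_def)
    ultimately show False using snake_vertex_bound s step_coord_sum[of d] by fastforce
  qed
  show "ne_corner (step d ?p) \<notin> snake_vertices ds"
    using snake_vertex_bound s step_coord_sum[of d ?p] by (fastforce simp: ne_corner_def)
qed

lemma square_attachment_snoc:
  "square_attachment (snake_vertices ds) (snake_edges ds)
     (step d (last_tile ds)) (ne_corner (last_tile ds))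
     (step d (step d (last_tile ds))) (ne_corner (step d (last_tile ds)))"
proof
  let ?p = "last_tile ds"
  show "step d ?p \<in> snake_vertices ds" "ne_corner ?p \<in> snake_vertices ds"
    using step_in_tile_corners ne_corner_in_tile_corners tile_corners_subset_snake_vertices by blast+
  show "step d ?p \<noteq> ne_corner ?p" "step d (step d ?p) \<noteq> ne_corner (step d ?p)"
    by (cases d; cases ?p; simp add: ne_corner_def)+
qed (simp_all add: finite_graph_snake new_corners_notin_snake_vertices)

lemma snake_vertices_snoc_new:
  "snake_vertices (ds @ [d])
    = snake_vertices ds \<union> {step d (step d (last_tile ds)), ne_corner (step d (last_tile ds))}"
  unfolding snake_vertices_snoc tile_corners_step
  using step_in_tile_corners ne_corner_in_tile_corners tile_corners_subset_snake_vertices by blast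

lemma snake_edges_snoc_new:
  "snake_edges (ds @ [d]) = snake_edges ds \<union>
     {{step d (last_tile ds), step d (step d (last_tile ds))},
      {ne_corner (last_tile ds), ne_corner (step d (last_tile ds))},
      {step d (step d (last_tile ds)), ne_corner (step d (last_tile ds))}}"
  unfolding snake_edges_snoc tile_edges_step
  using shared_edge_in_tile_edges tile_edges_subset_snake_edges by blast

abbreviation snake_pm_minus :: "dir list \<Rightarrow> point set \<Rightarrow> nat" where
  "snake_pm_minus ds X \<equiv> pm_count_minus (snake_vertices ds) (snake_edges ds) X"

lemma snake_pm_minus_snoc:
  assumes "step d (last_tile ds) \<notin> X" "ne_corner (last_tile ds) \<notin> X"
    "step d (step d (last_tile ds)) \<notin> X" "ne_corner (step d (last_tile ds)) \<notin> X"
  shows "snake_pm_minus (ds @ [d]) X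
    = snake_pm_minus ds X + snake_pm_minus ds (X \<union> {step d (last_tile ds), ne_corner (last_tile ds)})"
  unfolding snake_vertices_snoc_new snake_edges_snoc_new
  by (rule square_attachment.pm_count_minus_attached[OF square_attachment_snoc assms])

lemma snake_pm_minus_snoc_new_pair:
  "snake_pm_minus (ds @ [d]) (X \<union> {step d (step d (last_tile ds)), ne_corner (step d (last_tile ds))})
    = snake_pm_minus ds X"
  unfolding snake_vertices_snoc_new snake_edges_snoc_new
  by (rule square_attachment.pm_count_minus_new_pair[OF square_attachment_snoc])

lemma snake_pm_minus_snoc_new_corner:
  assumes "step d (last_tile ds) \<notin> X" "step d (step d (last_tile ds)) \<notin> X"
  shows "snake_pm_minus (ds @ [d]) (X \<union> {ne_corner (step d (last_tile ds))})
    = snake_pm_minus ds (X \<union> {step d (last_tile ds)})"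
  unfolding snake_vertices_snoc_new snake_edges_snoc_new
  by (rule square_attachment.pm_count_minus_new_corner[OF square_attachment_snoc assms])

lemma snake_edges_at_ne_corner:
  assumes "e \<in> snake_edges ds" "ne_corner (last_tile ds) \<in> e"
  shows "e = north_edge (last_tile ds) \<or> e = east_edge (last_tile ds)"
proof -
  let ?p = "last_tile ds"
  obtain a d where e: "e = {a, step d a}" "step d a \<in> snake_vertices ds"
    using assms(1) by (rule snake_edge_unit_step)
  have sum: "fst (ne_corner ?p) + snd (ne_corner ?p) = int (length ds) + 2"
    using tile_pos_coord_sum[of ds "length ds"] by (simp add: ne_corner_def)
  have "ne_corner ?p \<noteq> a"
    using snake_vertex_bound[OF e(2)] step_coord_sum[of d a] sum by auto
  then have "ne_corner ?p = step d a" using assms(2) e(1) by blast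
  then show ?thesis unfolding e(1)
    by (cases d; cases a; cases ?p) (auto simp: ne_corner_def north_edge_def east_edge_def)
qed

lemma card_perfect_matchings_snake_last_tile:
  "card (perfect_matchings (snake_vertices ds) (snake_edges ds))
    = snake_pm_minus ds (north_edge (last_tile ds)) + snake_pm_minus ds (east_edge (last_tile ds))"
proof -
  let ?p = "last_tile ds" and ?V = "snake_vertices ds" and ?E = "snake_edges ds"
  have edges: "north_edge ?p \<in> ?E" "east_edge ?p \<in> ?E"
    using tile_edges_subset_snake_edges[of "length ds" ds] unfolding tile_edges_def by auto
  have ne: "ne_corner ?p \<in> north_edge ?p" "ne_corner ?p \<in> east_edge ?p"
    by (simp_all add: ne_corner_def north_edge_def east_edge_def)
  have ne_in: "ne_corner ?p \<in> ?V"
    using ne_corner_in_tile_corners tile_corners_subset_snake_vertices[of "length ds" ds] by blast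
  have "east_edge ?p \<noteq> north_edge ?p" by (simp add: north_edge_def east_edge_def doubleton_eq_iff)
  have "card (perfect_matchings ?V ?E)
      = pm_count_minus ?V (?E - {north_edge ?p}) {} + snake_pm_minus ds (north_edge ?p)"
    using pm_count_minus_split_edge[OF finite_graph_snake edges(1), of "{}"] by (simp add: pm_count_minus_empty)
  also have "pm_count_minus ?V (?E - {north_edge ?p}) {}
      = pm_count_minus ?V (?E - {north_edge ?p}) ({} \<union> east_edge ?p)"
    by (rule pm_count_minus_pendant[OF finite_graph_subset[OF finite_graph_snake], where w = "ne_corner ?p"])
      (use edges ne ne_in \<open>east_edge ?p \<noteq> _\<close> snake_edges_at_ne_corner in blast)+
  also have "\<dots> = snake_pm_minus ds (east_edge ?p)"
  proof -
    have "{f \<in> ?E - {north_edge ?p}. f \<inter> east_edge ?p = {}} = {f \<in> ?E. f \<inter> east_edge ?p = {}}"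
      using ne(1,2) by blast
    then show ?thesis unfolding pm_count_minus_def by simp
  qed
  finally show ?thesis by simp
qed

definition even_point :: "point \<Rightarrow> bool" where
  "even_point w \<longleftrightarrow> even (fst w + snd w)"

lemma even_point_step: "even_point (step d p) \<longleftrightarrow> \<not> even_point p"
  unfolding even_point_def step_coord_sum by simp

lemma snake_edges_bichromatic:
  assumes "e \<in> snake_edges ds" "a \<in> e" "b \<in> e" "a \<noteq> b"
  shows "even_point a \<noteq> even_point b"
proof -
  obtain c d where "e = {c, step d c}" using assms(1) by (rule snake_edge_unit_step)
  then have "a = c \<and> b = step d c \<or> a = step d c \<and> b = c" using assms(2-4) by blast
  then show ?thesis using even_point_step[of d c] by auto
qed

lemma card_filter_Un_new_pair:
  assumes "finite A" "u \<notin> A" "v \<notin> A" "P u \<noteq> P v"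
  shows "card {w \<in> A \<union> {u, v}. P w} = Suc (card {w\<in>A. P w})"
proof -
  have "{w \<in> A \<union> {u, v}. P w} = insert (if P u then u else v) {w\<in>A. P w}"
    using assms(4) by auto
  then show ?thesis using assms(1-3) by simp
qed

lemma snake_vertices_balanced:
  "card {w\<in>snake_vertices ds. even_point w} = card {w\<in>snake_vertices ds. \<not> even_point w}"
proof (induction ds rule: rev_induct)
  case Nil
  have "snake_vertices [] = {(0, 0), (1, 0), (0, 1), (1, 1)}"
    by (simp add: snake_vertices_def ntiles_def tile_corners_def lessThan_Suc)
  then have "{w\<in>snake_vertices []. even_point w} = {(0, 0), (1, 1)}"
    "{w\<in>snake_vertices []. \<not> even_point w} = {(1, 0), (0, 1)}"
    by (auto simp: even_point_def)
  then show ?case by simp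
next
  case (snoc d ds)
  let ?u = "step d (step d (last_tile ds))" and ?v = "ne_corner (step d (last_tile ds))"
  have new: "?u \<notin> snake_vertices ds" "?v \<notin> snake_vertices ds"
    by (rule new_corners_notin_snake_vertices)+
  have "even_point ?u \<noteq> even_point ?v"
    by (cases d; cases "last_tile ds") (auto simp: even_point_def ne_corner_def)
  moreover have "finite (snake_vertices ds)" using finite_graph_snake unfolding finite_graph_def by blast
  ultimately show ?case
    using snoc.IH card_filter_Un_new_pair[OF _ new, of even_point]
      card_filter_Un_new_pair[OF _ new, of "\<lambda>w. \<not> even_point w"]
    unfolding snake_vertices_snoc_new by simp
qed

lemma snake_pm_minus_same_colour:
  assumes "a \<in> snake_vertices ds" "b \<in> snake_vertices ds" "a \<noteq> b" "even_point a = even_point b"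
  shows "snake_pm_minus ds {a, b} = 0"
  using perfect_matchings_delete_same_colour[OF finite_graph_snake snake_edges_bichromatic
      snake_vertices_balanced assms]
  unfolding pm_count_minus_def by simp

section \<open>Half-turn symmetry of palindromic snake graphs\<close>

lemma tile_pos_count:
  "i \<le> length ds \<Longrightarrow>
     tile_pos ds i = (int (count_list (take i ds) East), int (count_list (take i ds) North))"
proof (induction i)
  case (Suc i)
  then have "take (Suc i) ds = take i ds @ [ds ! i]" by (simp add: take_Suc_conv_app_nth)
  with Suc show ?case by (cases "ds ! i") auto
qed simp

lemma tile_pos_palindrome:
  assumes "rev ds = ds" "i \<le> length ds"
  shows "tile_pos ds (length ds - i)
    = (fst (last_tile ds) - fst (tile_pos ds i), snd (last_tile ds) - snd (tile_pos ds i))"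
proof -
  have "take (length ds - i) ds = rev (drop i ds)" by (metis assms(1) rev_drop)
  moreover have "count_list ds d = count_list (take i ds) d + count_list (drop i ds) d" for d
    by (metis append_take_drop_id count_list_append)
  ultimately show ?thesis using assms(2) by (simp add: tile_pos_count)
qed

text \<open>The half-turn exchanging the corner \<open>(0, 0)\<close> with the north-east corner of the tile at \<open>c\<close>.\<close>

definition point_reflection :: "point \<Rightarrow> point \<Rightarrow> point" where
  "point_reflection c w = (fst c + 1 - fst w, snd c + 1 - snd w)"

lemma point_reflection_involution: "point_reflection c (point_reflection c w) = w"
  by (simp add: point_reflection_def)

lemma bij_point_reflection: "bij (point_reflection c)"
  by (metis bijI' point_reflection_involution)

lemma point_reflection_tile_corners:
  "point_reflection c ` tile_corners q = tile_corners (fst c - fst q, snd c - snd q)"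
  by (simp add: point_reflection_def tile_corners_def insert_commute algebra_simps)

lemma point_reflection_tile_edges:
  "(`) (point_reflection c) ` tile_edges q = tile_edges (fst c - fst q, snd c - snd q)"
  by (simp add: point_reflection_def tile_edges_def south_edge_def north_edge_def west_edge_def
      east_edge_def insert_commute algebra_simps)

lemma UN_lessThan_Suc_reverse: "(\<Union>i<Suc n. F (n - i)) = (\<Union>i<Suc n. F i)"
proof -
  have "(\<lambda>i. n - i) ` {..<Suc n} = {..<Suc n}"
  proof (intro equalityI subsetI)
    fix x assume "x \<in> {..<Suc n}"
    then show "x \<in> (\<lambda>i. n - i) ` {..<Suc n}" by (intro image_eqI[of _ _ "n - x"]) auto
  qed auto
  then show ?thesis by (metis image_image UN_simps(10) image_comp)
qed

lemma point_reflection_snake_vertices: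
  assumes "rev ds = ds"
  shows "point_reflection (last_tile ds) ` snake_vertices ds = snake_vertices ds"
proof -
  have "point_reflection (last_tile ds) ` snake_vertices ds
      = (\<Union>i<Suc (length ds). tile_corners (tile_pos ds (length ds - i)))"
    unfolding snake_vertices_def ntiles_def image_UN point_reflection_tile_corners
    by (intro SUP_cong) (simp_all add: tile_pos_palindrome[OF assms])
  also have "\<dots> = snake_vertices ds"
    unfolding snake_vertices_def ntiles_def Suc_eq_plus1[symmetric] by (rule UN_lessThan_Suc_reverse)
  finally show ?thesis .
qed

lemma point_reflection_snake_edges:
  assumes "rev ds = ds"
  shows "(`) (point_reflection (last_tile ds)) ` snake_edges ds = snake_edges ds"
proof -
  have "(`) (point_reflection (last_tile ds)) ` snake_edges ds
      = (\<Union>i<Suc (length ds). tile_edges (tile_pos ds (length ds - i)))"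
    unfolding snake_edges_def ntiles_def image_UN point_reflection_tile_edges
    by (intro SUP_cong) (simp_all add: tile_pos_palindrome[OF assms])
  also have "\<dots> = snake_edges ds"
    unfolding snake_edges_def ntiles_def Suc_eq_plus1[symmetric] by (rule UN_lessThan_Suc_reverse)
  finally show ?thesis .
qed

lemma snake_pm_minus_point_reflection:
  assumes "rev ds = ds"
  shows "snake_pm_minus ds (point_reflection (last_tile ds) ` X) = snake_pm_minus ds X"
  using pm_count_minus_bij_image[OF bij_point_reflection,
      of "last_tile ds" "snake_vertices ds" "snake_edges ds" X]
  unfolding point_reflection_snake_vertices[OF assms] point_reflection_snake_edges[OF assms] .

section \<open>The band graph\<close>

lemma last_tile_append_pair: "last_tile (ds @ [d, d']) = step d' (step d (last_tile ds))"
  using last_tile_snoc[of "ds @ [d]" d'] last_tile_snoc[of ds d] by simp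

lemma band_ext_snoc: "band_ext ds = (ds @ [East, East]) @ [North]"
  by (simp add: band_ext_def)

lemma band_glue_eq:
  "band_glue ds = (\<lambda>v. if v = ne_corner (step North (last_tile (ds @ [East, East]))) then (0, 0)
     else if v = step North (step North (last_tile (ds @ [East, East]))) then (1, 0) else v)"
proof -
  define K where "K = ds @ [East, East]"
  define p where "p = last_tile K"
  have "ntiles ds + 2 = length (K @ [North])" by (simp add: K_def ntiles_def)
  then have "tile_pos (band_ext ds) (ntiles ds + 2) = step North p"
    unfolding band_ext_snoc K_def[symmetric] p_def by (metis last_tile_snoc)
  then have "band_glue ds = (\<lambda>v. if v = (fst (step North p) + 1, snd (step North p) + 1) then (0, 0)
     else if v = (fst (step North p), snd (step North p) + 1) then (1, 0) else v)"
    unfolding band_glue_def Let_def by (simp only:)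
  also have "\<dots> = (\<lambda>v. if v = ne_corner (step North p) then (0, 0)
     else if v = step North (step North p) then (1, 0) else v)"
    by (cases p) (simp add: ne_corner_def cong: if_cong)
  finally show ?thesis unfolding K_def p_def .
qed

lemma band_glue_new_corners:
  "band_glue ds (ne_corner (step North (last_tile (ds @ [East, East])))) = (0, 0)"
  "band_glue ds (step North (step North (last_tile (ds @ [East, East])))) = (1, 0)"
  by (cases "last_tile (ds @ [East, East])"; simp add: band_glue_eq ne_corner_def)+

lemma band_glue_fixes_snake_vertices:
  "v \<in> snake_vertices (ds @ [East, East]) \<Longrightarrow> band_glue ds v = v"
  using new_corners_notin_snake_vertices[of North "ds @ [East, East]"]
  unfolding band_glue_eq by auto

lemma band_glue_fixes_snake_edges:
  assumes "e \<in> snake_edges (ds @ [East, East])"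
  shows "band_glue ds ` e = e"
proof -
  have "band_glue ds ` e = (\<lambda>v. v) ` e"
    using band_glue_fixes_snake_vertices snake_edges_subset[OF assms] by (intro image_cong) auto
  then show ?thesis by simp
qed

lemma origin_edge_in_snake: "{(0, 0), (1, 0)} \<in> snake_edges ds"
  using tile_edges_subset_snake_edges[of 0 ds] by (auto simp: tile_edges_def south_edge_def)

lemma band_vertices_eq: "band_vertices ds = snake_vertices (ds @ [East, East])"
proof -
  define K where "K = ds @ [East, East]"
  define p where "p = last_tile K"
  have "band_glue ds ` snake_vertices K = snake_vertices K"
    using band_glue_fixes_snake_vertices unfolding K_def by simp
  moreover have "band_glue ds (step North (step North p)) = (1, 0)"
    "band_glue ds (ne_corner (step North p)) = (0, 0)"
    unfolding p_def K_def by (rule band_glue_new_corners)+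
  ultimately have "band_vertices ds = snake_vertices K \<union> {(1, 0), (0, 0)}"
    unfolding band_vertices_def band_ext_snoc K_def[symmetric] snake_vertices_snoc_new p_def[symmetric]
    by (simp only: image_Un image_insert image_empty)
  then show ?thesis using origin_edge_in_snake snake_edges_subset unfolding K_def by blast
qed

lemma band_edges_eq:
  "band_edges ds = insert {step North (last_tile (ds @ [East, East])), (1, 0)}
     (insert {ne_corner (last_tile (ds @ [East, East])), (0, 0)} (snake_edges (ds @ [East, East])))"
proof -
  define K where "K = ds @ [East, East]"
  define p where "p = last_tile K"
  have "(`) (band_glue ds) ` snake_edges K = snake_edges K"
    using band_glue_fixes_snake_edges unfolding K_def by simp
  moreover have "band_glue ds (step North p) = step North p" "band_glue ds (ne_corner p) = ne_corner p"
    using step_in_tile_corners ne_corner_in_tile_corners tile_corners_subset_snake_vertices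
      band_glue_fixes_snake_vertices unfolding p_def K_def by blast+
  moreover have "band_glue ds (step North (step North p)) = (1, 0)"
    "band_glue ds (ne_corner (step North p)) = (0, 0)"
    unfolding p_def K_def by (rule band_glue_new_corners)+
  ultimately have "band_edges ds
      = snake_edges K \<union> {{step North p, (1, 0)}, {ne_corner p, (0, 0)}, {(1, 0), (0, 0)}}"
    unfolding band_edges_def band_ext_snoc K_def[symmetric] snake_edges_snoc_new p_def[symmetric]
    by (simp only: image_Un image_insert image_empty)
  then show ?thesis using origin_edge_in_snake[of K] unfolding p_def K_def by (auto simp: insert_commute)
qed

lemma origin_in_snake_vertices: "(0, 0) \<in> snake_vertices ds" "(1, 0) \<in> snake_vertices ds"
  using origin_edge_in_snake snake_edges_subset by blast+

lemma last_tile_corners_in_snake_East_East: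
  "step North (step East (step East (last_tile ds))) \<in> snake_vertices (ds @ [East, East])"
  "ne_corner (step East (step East (last_tile ds))) \<in> snake_vertices (ds @ [East, East])"
  using step_in_tile_corners ne_corner_in_tile_corners
    tile_corners_subset_snake_vertices[of "length (ds @ [East, East])" "ds @ [East, East]"]
  unfolding last_tile_append_pair by blast+

lemma doubleton_notin_snake_edges:
  assumes "fst b + snd b + 2 \<le> fst a + snd a"
  shows "{a, b} \<notin> snake_edges ds"
proof
  assume "{a, b} \<in> snake_edges ds"
  then obtain c d where "{a, b} = {c, step d c}" by (rule snake_edge_unit_step)
  then show False using assms step_coord_sum[of d c] by (auto simp: doubleton_eq_iff)
qed

lemma card_perfect_matchings_band:
  fixes ds :: "dir list"
  defines "K \<equiv> ds @ [East, East]" and "P \<equiv> step North (step East (step East (last_tile ds)))"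
    and "Q \<equiv> ne_corner (step East (step East (last_tile ds)))"
  shows "card (perfect_matchings (band_vertices ds) (band_edges ds))
    = snake_pm_minus K {} + snake_pm_minus K {P, (1, 0)} + snake_pm_minus K {Q, (0, 0)}
      + snake_pm_minus K ({P, (1, 0)} \<union> {Q, (0, 0)})"
proof -
  obtain x y where p: "last_tile ds = (x, y)" and xy: "x + y = int (length ds)" "0 \<le> y"
    by (metis prod.collapse tile_pos_coord_sum tile_pos_nonneg)
  have PQ: "P = (x + 2, y + 1)" "Q = (x + 3, y + 1)" by (simp_all add: P_def Q_def p ne_corner_def)
  have "P \<in> snake_vertices K" "Q \<in> snake_vertices K"
    unfolding P_def Q_def K_def by (rule last_tile_corners_in_snake_East_East)+
  then have "finite_graph (snake_vertices K) (insert {P, (1, 0)} (insert {Q, (0, 0)} (snake_edges K)))"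
    using origin_in_snake_vertices PQ xy by (intro finite_graph_insert finite_graph_snake) auto
  moreover have "{P, (1, 0)} \<notin> insert {Q, (0, 0)} (snake_edges K)" "{Q, (0, 0)} \<notin> snake_edges K"
    using doubleton_notin_snake_edges[of "(1, 0)" P K] doubleton_notin_snake_edges[of "(0, 0)" Q K] PQ xy
    by (auto simp: doubleton_eq_iff)
  moreover have "{P, (1, 0)} \<inter> {Q, (0, 0)} = {}" using PQ xy by auto
  ultimately show ?thesis
    unfolding band_vertices_eq band_edges_eq last_tile_append_pair
    unfolding K_def[symmetric] P_def[symmetric] Q_def[symmetric]
    by (rule card_perfect_matchings_insert_two_edges)
qed

lemma card_perfect_matchings_snoc_East_East:
  "card (perfect_matchings (snake_vertices (ds @ [East, East])) (snake_edges (ds @ [East, East])))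
    = 2 * card (perfect_matchings (snake_vertices ds) (snake_edges ds))
      + snake_pm_minus ds (east_edge (last_tile ds))"
proof -
  let ?p = "last_tile ds"
  have "card (perfect_matchings (snake_vertices ((ds @ [East]) @ [East]))
        (snake_edges ((ds @ [East]) @ [East])))
      = snake_pm_minus (ds @ [East]) {}
        + snake_pm_minus (ds @ [East]) ({} \<union> {step East (step East ?p), ne_corner (step East ?p)})"
    using snake_pm_minus_snoc[of East "ds @ [East]" "{}"]
    by (simp add: last_tile_snoc tile_pos_append pm_count_minus_empty insert_commute)
  also have "snake_pm_minus (ds @ [East]) ({} \<union> {step East (step East ?p), ne_corner (step East ?p)})
      = snake_pm_minus ds {}"
    by (rule snake_pm_minus_snoc_new_pair)
  also have "snake_pm_minus (ds @ [East]) {}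
      = snake_pm_minus ds {} + snake_pm_minus ds ({} \<union> {step East ?p, ne_corner ?p})"
    by (rule snake_pm_minus_snoc) simp_all
  also have "{step East ?p, ne_corner ?p} = east_edge ?p"
    by (cases ?p) (simp add: east_edge_def ne_corner_def)
  finally show ?thesis by (simp add: pm_count_minus_empty)
qed

lemma snake_pm_minus_snoc_East_East_far_corners:
  fixes ds :: "dir list"
  defines "P \<equiv> step North (step East (step East (last_tile ds)))"
    and "Q \<equiv> ne_corner (step East (step East (last_tile ds)))"
  shows "snake_pm_minus (ds @ [East, East]) ({P, (1, 0)} \<union> {Q, (0, 0)})
    = snake_pm_minus ds (south_edge (0, 0))"
proof -
  let ?p = "last_tile ds" and ?S = "south_edge (0, 0)"
  obtain x y where p: "?p = (x, y)" and xy: "0 \<le> x" "0 \<le> y"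
    by (metis prod.collapse tile_pos_nonneg)
  have "{P, (1, 0)} \<union> {Q, (0, 0)}
      = (?S \<union> {ne_corner (step East ?p)}) \<union> {ne_corner (step East (step East ?p))}"
    by (auto simp: P_def Q_def p south_edge_def ne_corner_def)
  then have "snake_pm_minus ((ds @ [East]) @ [East]) ({P, (1, 0)} \<union> {Q, (0, 0)})
      = snake_pm_minus (ds @ [East]) ((?S \<union> {ne_corner (step East ?p)}) \<union> {step East (step East ?p)})"
    using snake_pm_minus_snoc_new_corner[of East "ds @ [East]" "?S \<union> {ne_corner (step East ?p)}"] xy
    unfolding last_tile_snoc by (simp add: p south_edge_def ne_corner_def)
  also have "(?S \<union> {ne_corner (step East ?p)}) \<union> {step East (step East ?p)}
      = ?S \<union> {step East (step East ?p), ne_corner (step East ?p)}" by blast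
  also have "snake_pm_minus (ds @ [East]) \<dots> = snake_pm_minus ds ?S"
    by (rule snake_pm_minus_snoc_new_pair)
  finally show ?thesis by simp
qed

lemma point_reflection_south_edge_origin: "point_reflection c ` south_edge (0, 0) = north_edge c"
  by (auto simp: point_reflection_def south_edge_def north_edge_def)

lemma card_perfect_matchings_band_palindrome:
  assumes "rev ds = ds" "even (length ds)"
  shows "card (perfect_matchings (band_vertices ds) (band_edges ds))
    = 3 * card (perfect_matchings (snake_vertices ds) (snake_edges ds))"
proof -
  define P where "P = step North (step East (step East (last_tile ds)))"
  define Q where "Q = ne_corner (step East (step East (last_tile ds)))"
  obtain x y where p: "last_tile ds = (x, y)" and xy: "x + y = int (length ds)" "0 \<le> x" "0 \<le> y"
    by (metis prod.collapse tile_pos_coord_sum tile_pos_nonneg)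
  have PQ: "P = (x + 2, y + 1)" "Q = (x + 3, y + 1)" by (simp_all add: P_def Q_def p ne_corner_def)
  have "P \<in> snake_vertices (ds @ [East, East])" "Q \<in> snake_vertices (ds @ [East, East])"
    unfolding P_def Q_def by (rule last_tile_corners_in_snake_East_East)+
  moreover have "even (x + y)" using assms(2) xy(1) by simp
  ultimately have "snake_pm_minus (ds @ [East, East]) {P, (1, 0)} = 0"
    "snake_pm_minus (ds @ [East, East]) {Q, (0, 0)} = 0"
    using origin_in_snake_vertices PQ xy by (auto simp: even_point_def intro!: snake_pm_minus_same_colour)
  moreover have "snake_pm_minus (ds @ [East, East]) ({P, (1, 0)} \<union> {Q, (0, 0)})
      = snake_pm_minus ds (north_edge (last_tile ds))"
    unfolding P_def Q_def snake_pm_minus_snoc_East_East_far_corners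
    using snake_pm_minus_point_reflection[OF assms(1)] point_reflection_south_edge_origin by metis
  ultimately show ?thesis
    unfolding card_perfect_matchings_band pm_count_minus_empty card_perfect_matchings_snoc_East_East
    using card_perfect_matchings_snake_last_tile[of ds] by (simp add: P_def Q_def)
qed

section \<open>Snake graphs of continued fractions\<close>

lemma west_edge_step_East: "west_edge (step East p) = east_edge p"
  by (cases p) (simp add: west_edge_def east_edge_def)

lemma south_edge_step_North: "south_edge (step North p) = north_edge p"
  by (cases p) (simp add: south_edge_def north_edge_def)

lemma sign_functionD:
  assumes "is_sign_function ds f" "i \<le> length ds"
  shows "f (north_edge (tile_pos ds i)) = f (west_edge (tile_pos ds i))"
    "f (south_edge (tile_pos ds i)) = f (east_edge (tile_pos ds i))"
    "f (north_edge (tile_pos ds i)) = (\<not> f (south_edge (tile_pos ds i)))"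
  using assms unfolding is_sign_function_def ntiles_def Let_def by (auto simp: less_Suc_eq_le)

lemma sign_function_south_edge_Suc:
  assumes sf: "is_sign_function ds f" and i: "i < length ds"
  shows "f (south_edge (tile_pos ds (Suc i))) = (\<not> f (south_edge (tile_pos ds i)))"
proof (cases "ds ! i")
  case East
  then have t: "tile_pos ds (Suc i) = step East (tile_pos ds i)" by simp
  have "f (south_edge (tile_pos ds (Suc i))) = (\<not> f (north_edge (tile_pos ds (Suc i))))"
    using sign_functionD(3)[OF sf, of "Suc i"] i by simp
  also have "f (north_edge (tile_pos ds (Suc i))) = f (west_edge (tile_pos ds (Suc i)))"
    using sign_functionD(1)[OF sf, of "Suc i"] i by simp
  also have "west_edge (tile_pos ds (Suc i)) = east_edge (tile_pos ds i)"
    unfolding t by (rule west_edge_step_East)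
  also have "f (east_edge (tile_pos ds i)) = f (south_edge (tile_pos ds i))"
    using sign_functionD(2)[OF sf, of i] i by simp
  finally show ?thesis .
next
  case North
  then have t: "tile_pos ds (Suc i) = step North (tile_pos ds i)" by simp
  show ?thesis unfolding t south_edge_step_North using sign_functionD(3)[OF sf, of i] i by simp
qed

lemma sign_function_south_edge:
  assumes sf: "is_sign_function ds f"
  shows "i \<le> length ds \<Longrightarrow> f (south_edge (tile_pos ds i)) = (f (south_edge (tile_pos ds 0)) = even i)"
proof (induction i)
  case 0 then show ?case by simp
next
  case (Suc i)
  then show ?case using sign_function_south_edge_Suc[OF sf, of i] by simp
qed

lemma sign_function_interior_edge:
  assumes sf: "is_sign_function ds f" and i: "i < length ds"
  shows "f (interior_edge ds (Suc i))
    = (if ds ! i = North then \<not> f (south_edge (tile_pos ds i)) else f (south_edge (tile_pos ds i)))"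
  using sign_functionD[OF sf, of i] i unfolding interior_edge_def by auto

text \<open>
  A sign function alternates along the south edges of consecutive tiles, so the step after tile
  \<open>i\<close> goes East exactly when the sign of the interior edge \<open>e\<^sub>i\<^sub>+\<^sub>1\<close> continues this alternation.
\<close>

definition pattern_dir :: "bool list \<Rightarrow> nat \<Rightarrow> dir" where
  "pattern_dir P i = (if P ! Suc i = (P ! 0 = even i) then East else North)"

definition edge_signs :: "dir list \<Rightarrow> (edge \<Rightarrow> bool) \<Rightarrow> edge \<Rightarrow> bool list" where
  "edge_signs ds f ed = map f ([south_edge (tile_pos ds 0)] @ map (interior_edge ds) [1..<ntiles ds] @ [ed])"

lemma length_edge_signs: "length (edge_signs ds f ed) = length ds + 2"
  unfolding edge_signs_def ntiles_def by (simp del: upt_Suc)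

lemma edge_signs_nth_0: "edge_signs ds f ed ! 0 = f (south_edge (tile_pos ds 0))"
  unfolding edge_signs_def by simp

lemma edge_signs_nth_Suc: "i < length ds \<Longrightarrow> edge_signs ds f ed ! Suc i = f (interior_edge ds (Suc i))"
  unfolding edge_signs_def ntiles_def by (simp add: nth_append del: upt_Suc)

lemma edge_signs_nth_last: "edge_signs ds f ed ! Suc (length ds) = f ed"
  unfolding edge_signs_def ntiles_def by (simp add: nth_append del: upt_Suc)

lemma sign_function_determines_dir:
  assumes sf: "is_sign_function ds f" and i: "i < length ds"
  shows "ds ! i = pattern_dir (edge_signs ds f ed) i"
proof -
  have "f (south_edge (tile_pos ds i)) = (f (south_edge (tile_pos ds 0)) = even i)"
    using sign_function_south_edge[OF sf] i by simp
  then show ?thesis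
    unfolding pattern_dir_def edge_signs_nth_0 edge_signs_nth_Suc[OF i] sign_function_interior_edge[OF sf i]
    by (cases "ds ! i") auto
qed

lemma sign_pattern_Not: "sign_pattern c (\<not> s) = map Not (sign_pattern c s)"
  unfolding sign_pattern_def map_concat map_map
  by (rule arg_cong[where f = concat], rule map_cong) auto

lemma length_sign_pattern: "length (sign_pattern c s) = sum_list c"
proof -
  have "length (sign_pattern c s) = sum_list (map (\<lambda>k. c ! k) [0..<length c])"
    unfolding sign_pattern_def by (simp add: length_concat o_def)
  also have "map (\<lambda>k. c ! k) [0..<length c] = c" by (rule map_nth)
  finally show ?thesis .
qed

lemma pattern_dir_map_Not: "Suc i < length P \<Longrightarrow> pattern_dir (map Not P) i = pattern_dir P i"
proof -
  assume a: "Suc i < length P"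
  then have "0 < length P" by linarith
  then have e1: "map Not P ! 0 = (\<not> P ! 0)" and e2: "map Not P ! Suc i = (\<not> P ! Suc i)" using a by simp_all
  show ?thesis unfolding pattern_dir_def e1 e2 by (cases "P ! 0"; cases "P ! Suc i"; simp)
qed

lemma cf_snake_prop_imp_pattern_dirs:
  assumes pr: "cf_snake_prop c ds"
  shows "ds = map (pattern_dir (sign_pattern c True)) [0..<sum_list c - 2]"
proof -
  obtain f ed s where sf: "is_sign_function ds f" and W: "edge_signs ds f ed = sign_pattern c s"
    and n: "ntiles ds = sum_list c - 1"
    using pr unfolding cf_snake_prop_def edge_signs_def by blast
  have L: "length ds = sum_list c - 2" using n unfolding ntiles_def by simp
  have lenP: "length (sign_pattern c True) = length ds + 2"
    using W length_edge_signs[of ds f ed] length_sign_pattern[of c s] length_sign_pattern[of c True] by simp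
  have d: "ds ! i = pattern_dir (sign_pattern c True) i" if i: "i < length ds" for i
  proof -
    have "ds ! i = pattern_dir (sign_pattern c s) i"
      using sign_function_determines_dir[OF sf i, of ed] W by simp
    also have "\<dots> = pattern_dir (sign_pattern c True) i"
    proof (cases s)
      case False
      then have "sign_pattern c s = map Not (sign_pattern c True)" using sign_pattern_Not[of c True] by simp
      then show ?thesis using pattern_dir_map_Not[of i "sign_pattern c True"] i lenP by simp
    qed simp
    finally show ?thesis .
  qed
  show ?thesis by (rule nth_equalityI) (simp_all add: L[symmetric] d)
qed

definition checkerboard_sign :: "edge \<Rightarrow> bool" where
  "checkerboard_sign e \<longleftrightarrow>
     (\<exists>a b. e = {(a, b), (a + 1, b)} \<and> even (a + b)) \<or> (\<exists>a b. e = {(a, b), (a, b + 1)} \<and> odd (a + b))"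

lemma checkerboard_sign_edges:
  "checkerboard_sign (south_edge (a, b)) = even (a + b)" "checkerboard_sign (north_edge (a, b)) = odd (a + b)"
  "checkerboard_sign (west_edge (a, b)) = odd (a + b)" "checkerboard_sign (east_edge (a, b)) = even (a + b)"
  by (auto simp: checkerboard_sign_def south_edge_def north_edge_def west_edge_def east_edge_def
      doubleton_eq_iff)

lemma is_sign_function_checkerboard: "is_sign_function ds checkerboard_sign"
  unfolding is_sign_function_def Let_def
  by (metis checkerboard_sign_edges prod.collapse)

lemma checkerboard_sign_interior_edge:
  "i < length ds \<Longrightarrow> checkerboard_sign (interior_edge ds (Suc i)) = (ds ! i = East \<longleftrightarrow> even i)"
  using tile_pos_coord_sum[of ds i]
  by (cases "tile_pos ds i"; cases "ds ! i") (simp_all add: interior_edge_def checkerboard_sign_edges)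

lemma sign_pattern_nth_0: "c \<noteq> [] \<Longrightarrow> 0 < c ! 0 \<Longrightarrow> sign_pattern c s ! 0 = s"
  by (cases c) (simp_all add: sign_pattern_def upt_conv_Cons nth_append map_Suc_upt[symmetric] del: upt_Suc)

lemma edge_signs_checkerboard:
  assumes P0: "P ! 0" and len: "length P = length ds + 2"
    and dirs: "\<And>i. i < length ds \<Longrightarrow> ds ! i = pattern_dir P i"
  defines "ed \<equiv> if P ! Suc (length ds) = even (length ds) then east_edge (last_tile ds)
    else north_edge (last_tile ds)"
  shows "edge_signs ds checkerboard_sign ed = P"
proof (rule nth_equalityI)
  show "length (edge_signs ds checkerboard_sign ed) = length P" using length_edge_signs len by simp
next
  fix k assume "k < length (edge_signs ds checkerboard_sign ed)"
  then consider "k = 0" | i where "k = Suc i" "i < length ds" | "k = Suc (length ds)"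
    using length_edge_signs by (cases k) fastforce+
  then show "edge_signs ds checkerboard_sign ed ! k = P ! k"
  proof cases
    case 1
    then show ?thesis using P0 by (simp add: edge_signs_nth_0 checkerboard_sign_edges)
  next
    case (2 i)
    then show ?thesis using dirs[of i] P0
      by (simp add: edge_signs_nth_Suc checkerboard_sign_interior_edge pattern_dir_def)
  next
    case 3
    have "checkerboard_sign ed = P ! Suc (length ds)"
      using tile_pos_coord_sum[of ds "length ds"] unfolding ed_def
      by (cases "last_tile ds") (auto simp: checkerboard_sign_edges)
    then show ?thesis using 3 edge_signs_nth_last by simp
  qed
qed

lemma cf_snake_prop_pattern_dirs:
  assumes c: "c \<noteq> []" "0 < c ! 0" and n: "2 \<le> sum_list c"
  shows "cf_snake_prop c (map (pattern_dir (sign_pattern c True)) [0..<sum_list c - 2])"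
proof -
  define P where "P = sign_pattern c True"
  define ds where "ds = map (pattern_dir P) [0..<sum_list c - 2]"
  define ed where "ed = (if P ! Suc (length ds) = even (length ds) then east_edge (last_tile ds)
    else north_edge (last_tile ds))"
  have "edge_signs ds checkerboard_sign ed = P" unfolding ed_def
    by (rule edge_signs_checkerboard)
      (use sign_pattern_nth_0[OF c] n in \<open>simp_all add: P_def ds_def length_sign_pattern\<close>)
  moreover have "ed \<in> {north_edge (tile_pos ds (ntiles ds - 1)), east_edge (tile_pos ds (ntiles ds - 1))}"
    unfolding ed_def ntiles_def by simp
  moreover have "ntiles ds = sum_list c - 1" unfolding ntiles_def ds_def using n by simp
  ultimately show ?thesis
    using is_sign_function_checkerboard unfolding cf_snake_prop_def P_def[symmetric] ds_def[symmetric]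
    unfolding edge_signs_def P_def by blast
qed

lemma cf_snake_eq:
  assumes c: "c \<noteq> []" "0 < c ! 0" and n: "2 \<le> sum_list c"
  shows "cf_snake c = map (pattern_dir (sign_pattern c True)) [0..<sum_list c - 2]"
  unfolding cf_snake_def
  by (rule the_equality) (rule cf_snake_prop_pattern_dirs[OF c n], erule cf_snake_prop_imp_pattern_dirs)

section \<open>Markov snake graphs\<close>

lemma div_sum_complement:
  fixes p q j :: nat
  assumes cop: "coprime p q" and j: "0 < j" "j < p"
  shows "(j * q) div p + ((p - j) * q) div p + 1 = q"
proof -
  define a where "a = j * q"
  define b where "b = (p - j) * q"
  have ab: "a + b = p * q" unfolding a_def b_def using j by (simp add: add_mult_distrib[symmetric])
  have p0: "0 < p" using j by simp
  have nd: "\<not> p dvd k * q" if "0 < k" "k < p" for k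
  proof
    assume "p dvd k * q"
    then have "p dvd k" using cop by (simp add: coprime_dvd_mult_left_iff)
    then show False using that by (auto dest: dvd_imp_le)
  qed
  have am: "a mod p \<noteq> 0" unfolding a_def using nd[OF j] by (simp add: dvd_eq_mod_eq_0)
  have bm: "b mod p \<noteq> 0" unfolding b_def using nd[of "p - j"] j by (simp add: dvd_eq_mod_eq_0)
  have r0: "(a mod p + b mod p) mod p = 0"
    using ab by (metis mod_add_eq mod_mult_self1_is_0 mult.commute)
  have rlt: "a mod p + b mod p < 2 * p"
    using mod_less_divisor[OF p0, of a] mod_less_divisor[OF p0, of b] by linarith
  have rgt: "0 < a mod p + b mod p" using am by simp
  have "p dvd (a mod p + b mod p)" using r0 by (simp add: dvd_eq_mod_eq_0)
  then obtain k where k: "a mod p + b mod p = p * k" by (rule dvdE)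
  have "k < 2" using rlt k p0 by (metis mult_less_cancel1 mult.commute)
  moreover have "k \<noteq> 0" using rgt k by auto
  ultimately have "k = 1" by simp
  then have r: "a mod p + b mod p = p" using k by simp
  have ea: "p * (a div p) + a mod p = a" by (rule mult_div_mod_eq)
  have eb: "p * (b div p) + b mod p = b" by (rule mult_div_mod_eq)
  have "p * (a div p) + p * (b div p) + p = p * q" using ea eb r ab by linarith
  then have "p * (a div p + b div p + 1) = p * q" by (simp add: distrib_left)
  then have "a div p + b div p + 1 = q" using mult_left_cancel[of p "a div p + b div p + 1" q] p0 by simp
  then show ?thesis unfolding a_def b_def .
qed

text \<open>
  \<open>\<lfloor>jq/p\<rfloor>\<close>, with the value \<open>q - 1\<close> at \<open>j = p\<close> so that \<open>v\<^sub>i\<close> is always a difference of two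
  consecutive values.
\<close>

definition markov_floor :: "nat \<Rightarrow> nat \<Rightarrow> nat \<Rightarrow> nat" where
  "markov_floor p q j = (if j < p then (j * q) div p else q - 1)"

lemma markov_v_eq_markov_floor_diff:
  "1 \<le> i \<Longrightarrow> i \<le> p \<Longrightarrow> markov_v p q i = markov_floor p q i - markov_floor p q (i - 1)"
  unfolding markov_v_def markov_floor_def by auto

lemma markov_floor_complement:
  assumes "coprime p q" "0 < p" "j \<le> p"
  shows "markov_floor p q j + markov_floor p q (p - j) = q - 1"
proof (cases "0 < j \<and> j < p")
  case True
  then have "j * q div p + (p - j) * q div p + 1 = q" using div_sum_complement[OF assms(1)] by blast
  then show ?thesis using True by (simp add: markov_floor_def)
next
  case False
  then have "j = 0 \<or> j = p" using assms(3) by linarith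
  then show ?thesis using assms(2) by (auto simp: markov_floor_def)
qed

lemma markov_floor_mono:
  assumes "coprime p q" "0 < p" "j \<le> k" "k \<le> p"
  shows "markov_floor p q j \<le> markov_floor p q k"
proof (cases "k < p")
  case True
  then show ?thesis using assms(3) by (simp add: markov_floor_def div_le_mono)
next
  case False
  then show ?thesis
    using markov_floor_complement[OF assms(1,2), of j] assms(3,4) by (simp add: markov_floor_def)
qed

lemma markov_v_symmetric:
  assumes "coprime p q" "0 < p" "1 \<le> i" "i \<le> p"
  shows "markov_v p q (p + 1 - i) = markov_v p q i"
proof -
  let ?F = "markov_floor p q"
  have "p - (i - 1) = p + 1 - i" "p + 1 - i - 1 = p - i" using assms(3,4) by auto
  then have "?F (i - 1) + ?F (p + 1 - i) = q - 1" "?F i + ?F (p - i) = q - 1"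
    using markov_floor_complement[OF assms(1,2), of "i - 1"] markov_floor_complement[OF assms(1,2), of i]
      assms(4) by simp_all
  moreover have "?F (i - 1) \<le> ?F i" using markov_floor_mono[OF assms(1,2)] assms(4) by simp
  moreover have "markov_v p q (p + 1 - i) = ?F (p + 1 - i) - ?F (p - i)"
    using markov_v_eq_markov_floor_diff[of "p + 1 - i" p q] \<open>p + 1 - i - 1 = p - i\<close> assms(3,4) by simp
  moreover have "markov_v p q i = ?F i - ?F (i - 1)"
    using markov_v_eq_markov_floor_diff assms(3,4) by blast
  ultimately show ?thesis by linarith
qed

definition markov_block :: "nat \<Rightarrow> nat list" where
  "markov_block v = [2] @ replicate (2 * (v - 1)) 1 @ [2]"

lemma markov_seq_blocks: "markov_seq p q = concat (map (\<lambda>i. markov_block (markov_v p q i)) [1..<p + 1])"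
  unfolding markov_seq_def markov_block_def ..

lemma markov_seq_Cons: "0 < p \<Longrightarrow> \<exists>c'. markov_seq p q = 2 # c'"
  unfolding markov_seq_blocks by (simp add: upt_conv_Cons markov_block_def del: upt_Suc)

lemma even_length_markov_seq: "even (length (markov_seq p q))"
proof -
  have "even (length (concat xs))" if "\<forall>x\<in>set xs. even (length x)" for xs :: "nat list list"
    using that by (induction xs) auto
  then show ?thesis unfolding markov_seq_blocks by (simp add: markov_block_def)
qed

lemma even_sum_list_markov_seq: "even (sum_list (markov_seq p q))"
proof -
  have "even (sum_list (concat xs))" if "\<forall>x\<in>set xs. even (sum_list x)" for xs :: "nat list list"
    using that by (induction xs) auto
  then show ?thesis unfolding markov_seq_blocks by (simp add: markov_block_def sum_list_replicate)
qed

lemma rev_concat_map_symmetric: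
  assumes "\<And>i. rev (f i) = f i" "\<And>i. 1 \<le> i \<Longrightarrow> i \<le> n \<Longrightarrow> f (n + 1 - i) = f i"
  shows "rev (concat (map f [1..<n + 1])) = concat (map f [1..<n + 1])"
proof -
  have "map f (rev [1..<n + 1]) = map f [1..<n + 1]"
  proof (rule nth_equalityI)
    fix k assume "k < length (map f (rev [1..<n + 1]))"
    then have "k < n" by (simp del: upt_Suc)
    then show "map f (rev [1..<n + 1]) ! k = map f [1..<n + 1] ! k"
      using assms(2)[of "k + 1"] by (simp add: rev_nth Suc_diff_Suc del: upt_Suc)
  qed simp
  then show ?thesis using assms(1) by (simp add: rev_concat rev_map[symmetric] comp_def del: upt_Suc)
qed

lemma rev_markov_seq:
  assumes "coprime p q" "0 < p"
  shows "rev (markov_seq p q) = markov_seq p q"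
  unfolding markov_seq_blocks
  by (rule rev_concat_map_symmetric)
    (simp add: markov_block_def, simp only: markov_v_symmetric[OF assms])

lemma rev_sign_pattern:
  assumes rc: "rev c = c" and ev: "even (length c)"
  shows "rev (sign_pattern c s) = map Not (sign_pattern c s)"
proof -
  define n where "n = length c"
  define g where "g k = replicate (c ! k) (if even k then s else \<not> s)" for k
  have sp: "sign_pattern c s = concat (map g [0..<n])" unfolding sign_pattern_def g_def n_def ..
  have "rev (sign_pattern c s) = concat (map (rev \<circ> g) (rev [0..<n]))"
    unfolding sp by (simp add: rev_concat rev_map)
  also have "map (rev \<circ> g) (rev [0..<n]) = map (map Not \<circ> g) [0..<n]"
  proof (rule nth_equalityI)
    show "length (map (rev \<circ> g) (rev [0..<n])) = length (map (map Not \<circ> g) [0..<n])" by simp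
  next
    fix k assume "k < length (map (rev \<circ> g) (rev [0..<n]))"
    then have k: "k < n" by simp
    have r: "rev [0..<n] ! k = n - Suc k" using k by (simp add: rev_nth)
    have cc: "c ! (n - Suc k) = c ! k" using rc k unfolding n_def by (metis rev_nth)
    have ee: "even (n - Suc k) = odd k" using ev k unfolding n_def by (simp add: even_diff_nat)
    show "map (rev \<circ> g) (rev [0..<n]) ! k = map (map Not \<circ> g) [0..<n] ! k"
      using k r cc ee by (simp add: g_def)
  qed
  also have "concat (map (map Not \<circ> g) [0..<n]) = map Not (sign_pattern c s)"
    unfolding sp by (simp add: map_concat)
  finally show ?thesis .
qed

lemma rev_pattern_dirs:
  assumes rP: "rev P = map Not P" and ev: "even (length P)"
  defines "L \<equiv> length P - 2"
  shows "rev (map (pattern_dir P) [0..<L]) = map (pattern_dir P) [0..<L]"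
proof (rule nth_equalityI)
  show "length (rev (map (pattern_dir P) [0..<L])) = length (map (pattern_dir P) [0..<L])" by simp
next
  fix i assume "i < length (rev (map (pattern_dir P) [0..<L]))"
  then have i: "i < L" by simp
  have n: "length P = L + 2" using i unfolding L_def by simp
  have neg: "P ! (length P - Suc k) = (\<not> P ! k)" if "k < length P" for k
  proof -
    have "rev P ! k = P ! (length P - Suc k)" using that by (simp add: rev_nth)
    moreover have "map Not P ! k = (\<not> P ! k)" using that by simp
    ultimately show ?thesis using rP by simp
  qed
  have lhs: "rev (map (pattern_dir P) [0..<L]) ! i = pattern_dir P (L - Suc i)" using i by (simp add: rev_nth)
  have a: "P ! Suc (L - Suc i) = (\<not> P ! Suc i)"
  proof -
    have "Suc (L - Suc i) = length P - Suc (Suc i)" using i n by simp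
    then show ?thesis using neg[of "Suc i"] i n by simp
  qed
  have evL: "even L" using ev n by simp
  have b: "even (L - Suc i) = odd i" using evL i by (simp add: even_diff_nat)
  show "rev (map (pattern_dir P) [0..<L]) ! i = map (pattern_dir P) [0..<L] ! i"
    unfolding lhs using i a b by (simp add: pattern_dir_def) (cases "P ! 0"; cases "P ! Suc i"; simp)
qed

lemma markov_snake_eq:
  assumes "0 < p"
  shows "markov_snake p q = map (pattern_dir (sign_pattern (markov_seq p q) True))
    [0..<length (sign_pattern (markov_seq p q) True) - 2]"
proof -
  obtain c' where c: "markov_seq p q = 2 # c'" using markov_seq_Cons[OF assms] by blast
  show ?thesis
    unfolding markov_snake_def length_sign_pattern by (rule cf_snake_eq) (simp_all add: c)
qed

lemma markov_snake_palindrome: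
  assumes "coprime p q" "0 < p"
  shows "rev (markov_snake p q) = markov_snake p q"
  unfolding markov_snake_eq[OF assms(2)]
  by (rule rev_pattern_dirs)
    (simp_all add: rev_sign_pattern rev_markov_seq[OF assms] even_length_markov_seq
      length_sign_pattern even_sum_list_markov_seq)

lemma even_length_markov_snake: "0 < p \<Longrightarrow> even (length (markov_snake p q))"
  using even_sum_list_markov_seq[of p q] by (simp add: markov_snake_eq length_sign_pattern)

theorem theorem4p10:
  fixes p q :: nat
  assumes "0 < p" and "p < q" and "coprime p q"
  shows "card (perfect_matchings (band_vertices (markov_snake p q)) (band_edges (markov_snake p q)))
         = 3 * card (perfect_matchings (snake_vertices (markov_snake p q)) (snake_edges (markov_snake p q)))"
  using card_perfect_matchings_band_palindrome[OF markov_snake_palindrome[OF assms(3,1)]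
      even_length_markov_snake[OF assms(1)]] .

end
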